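(* Let $g\colon\mathbb{S}^1\to\mathbb{S}^1$ be an orientation-preserving homeomorphism. For $i=1,2$, the map $\widetilde\iota_i=Q\circ\iota_i\colon\overline Z_i\to\widetilde Z$ is $1$-Lipschitz (with respect to $\sigma$ and $d_{\widetilde Z}$) and is a local isometry on $Z_i$. Moreover, for every $z\in\widetilde Z$ the preimage $\widetilde\iota_i^{-1}(z)$ is compact and connected, and it contains two or more points only if $\widetilde\iota_i^{-1}(z)\subset\mathbb{S}^1$.
   Context: Let $\mathbb{S}^2\subset\mathbb{R}^3$ be the unit sphere with great-circle distance $\sigma$, $\mathbb{S}^1$ the equator, $Z_1,Z_2$ the open southern and northern hemispheres. For an orientation-preserving homeomorphism $g\colon\mathbb{S}^1\to\mathbb{S}^1$, $Z$ is obtained from $\overline Z_1\sqcup\overline Z_2$ by identifying $z\in\mathbb{S}^1\subset\overline Z_1$ with $g(z)\in\mathbb{S}^1\subset\overline Z_2$, with maps $\iota_i\colon\overline Z_i\to Z$. Define $D(x,y)=\infty$ if one point is in $\iota_1(Z_1)$ and the other in $\iota_2(Z_2)$; $D(\iota_1(a),\iota_1(b))=\min\{\sigma(a,b),\sigma(g(a),g(b))\}$ for $a,b\in\mathbb{S}^1$; otherwise $D(x,y)=\sigma(\iota_i^{-1}(x),\iota_i^{-1}(y))$ for the common $i$. $d_Z=\inf\sum_k D(x_k,x_{k+1})$ over finite chains; $\widetilde Z$ is the metric space obtained by identifying points at $d_Z$-distance 0, $Q\colon Z\to\widetilde Z$ the quotient map, $d_{\widetilde Z}$ the induced distance. *)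

theory Defs
  imports "HOL-Analysis.Analysis"
begin

definition S2 :: "(real^3) set" where
  "S2 = {x. norm x = 1}"

definition S1 :: "(real^3) set" where
  "S1 = {x \<in> S2. x$3 = 0}"

definition Zo :: "nat \<Rightarrow> (real^3) set" where
  "Zo i = (if i = 1 then {x \<in> S2. x$3 < 0} else {x \<in> S2. x$3 > 0})"

definition Zc :: "nat \<Rightarrow> (real^3) set" where
  "Zc i = (if i = 1 then {x \<in> S2. x$3 \<le> 0} else {x \<in> S2. x$3 \<ge> 0})"

definition sigma :: "real^3 \<Rightarrow> real^3 \<Rightarrow> real" where
  "sigma a b = arccos (inner a b)"

definition eqpt :: "real \<Rightarrow> real^3" where
  "eqpt t = vector [cos t, sin t, 0]"

text \<open>A homeomorphism of the circle is orientation preserving iff it has a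
  strictly increasing lift.\<close>
definition orient_pres_homeo :: "(real^3 \<Rightarrow> real^3) \<Rightarrow> bool" where
  "orient_pres_homeo g \<longleftrightarrow>
     (\<exists>h. homeomorphism S1 S1 g h) \<and>
     (\<exists>F. continuous_on UNIV F \<and> strict_mono F \<and>
          (\<forall>t. F (t + 2*pi) = F t + 2*pi) \<and>
          (\<forall>t. g (eqpt t) = eqpt (F t)))"

definition DU :: "(nat \<times> (real^3)) set" where
  "DU = {(i, x). i \<in> {1, 2} \<and> x \<in> Zc i}"

definition glue :: "(real^3 \<Rightarrow> real^3) \<Rightarrow> ((nat \<times> (real^3)) \<times> (nat \<times> (real^3))) set" where
  "glue g = {((1, z), (2, g z)) | z. z \<in> S1}"

definition zrel :: "(real^3 \<Rightarrow> real^3) \<Rightarrow> ((nat \<times> (real^3)) \<times> (nat \<times> (real^3))) set" where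
  "zrel g = (glue g \<union> (glue g)\<inverse>)\<^sup>* \<inter> (DU \<times> DU)"

definition Z :: "(real^3 \<Rightarrow> real^3) \<Rightarrow> (nat \<times> (real^3)) set set" where
  "Z g = DU // zrel g"

definition iota :: "(real^3 \<Rightarrow> real^3) \<Rightarrow> nat \<Rightarrow> real^3 \<Rightarrow> (nat \<times> (real^3)) set" where
  "iota g i a = zrel g `` {(i, a)}"

definition iota_inv :: "(real^3 \<Rightarrow> real^3) \<Rightarrow> nat \<Rightarrow> (nat \<times> (real^3)) set \<Rightarrow> real^3" where
  "iota_inv g i x = (THE a. a \<in> Zc i \<and> iota g i a = x)"

definition D :: "(real^3 \<Rightarrow> real^3) \<Rightarrow> (nat \<times> (real^3)) set \<Rightarrow> (nat \<times> (real^3)) set \<Rightarrow> ereal" where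
  "D g x y =
    (if (x \<in> iota g 1 ` Zo 1 \<and> y \<in> iota g 2 ` Zo 2) \<or>
        (x \<in> iota g 2 ` Zo 2 \<and> y \<in> iota g 1 ` Zo 1) then \<infinity>
     else if x \<in> iota g 1 ` S1 \<and> y \<in> iota g 1 ` S1 then
       (let a = iota_inv g 1 x; b = iota_inv g 1 y in
         ereal (min (sigma a b) (sigma (g a) (g b))))
     else if x \<in> iota g 1 ` Zc 1 \<and> y \<in> iota g 1 ` Zc 1 then
       ereal (sigma (iota_inv g 1 x) (iota_inv g 1 y))
     else ereal (sigma (iota_inv g 2 x) (iota_inv g 2 y)))"

definition dZ :: "(real^3 \<Rightarrow> real^3) \<Rightarrow> (nat \<times> (real^3)) set \<Rightarrow> (nat \<times> (real^3)) set \<Rightarrow> ereal" where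
  "dZ g x y = Inf {sum_list (map2 (D g) xs (tl xs)) | xs.
                   xs \<noteq> [] \<and> set xs \<subseteq> Z g \<and> hd xs = x \<and> last xs = y}"

definition zero_rel :: "(real^3 \<Rightarrow> real^3) \<Rightarrow> ((nat \<times> (real^3)) set \<times> (nat \<times> (real^3)) set) set" where
  "zero_rel g = {(x, y). x \<in> Z g \<and> y \<in> Z g \<and> dZ g x y = 0}"

definition Zt :: "(real^3 \<Rightarrow> real^3) \<Rightarrow> (nat \<times> (real^3)) set set set" where
  "Zt g = Z g // zero_rel g"

definition Q :: "(real^3 \<Rightarrow> real^3) \<Rightarrow> (nat \<times> (real^3)) set \<Rightarrow> (nat \<times> (real^3)) set set" where
  "Q g x = zero_rel g `` {x}"

definition dZt :: "(real^3 \<Rightarrow> real^3) \<Rightarrow> (nat \<times> (real^3)) set set \<Rightarrow> (nat \<times> (real^3)) set set \<Rightarrow> ereal" where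
  "dZt g p q = dZ g (SOME x. x \<in> p) (SOME y. y \<in> q)"

definition iota_t :: "(real^3 \<Rightarrow> real^3) \<Rightarrow> nat \<Rightarrow> real^3 \<Rightarrow> (nat \<times> (real^3)) set set" where
  "iota_t g i a = Q g (iota g i a)"

end

theory Submission
  imports Defs
begin

text \<open>The glueing identifies (1, z) only with (2, g z), so each iota i is injective, and a
  one-step chain bounds the chain pseudo-distance dZ by sigma. Lower bounds on dZ come from
  potentials: two sigma-Lipschitz functions on the closed hemispheres that agree along the
  glueing are Lipschitz for D, hence for dZ. The potential min (sigma a _) h, where h is the
  distance from a to the equator, shows that iota_t i is a local isometry on the open hemisphere
  and that its fibres there are points. On the equator, if two points are at dZ-distance zero,
  then one of the two arcs joining them collapses entirely: otherwise a tent-shaped potential,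
  built from the monotone lift F of g and extended to the sphere by McShane's formula, separates
  them. Hence the fibres on the equator are arcs, and they are closed because iota 1 is
  1-Lipschitz.\<close>

declare One_nat_def [simp del]

section \<open>Great-circle distance\<close>

lemma abs_inner_le_1: "norm x = 1 \<Longrightarrow> norm y = 1 \<Longrightarrow> \<bar>inner x y\<bar> \<le> (1::real)"
  using Cauchy_Schwarz_ineq2[of x y] by simp

lemma sigma_commute: "sigma a b = sigma b a"
  by (simp add: sigma_def inner_commute)

lemma sigma_nonneg: "norm x = 1 \<Longrightarrow> norm y = 1 \<Longrightarrow> 0 \<le> sigma x y"
  unfolding sigma_def using abs_inner_le_1[of x y] by (intro arccos_lbound) auto

lemma sigma_le_pi: "norm x = 1 \<Longrightarrow> norm y = 1 \<Longrightarrow> sigma x y \<le> pi"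
  unfolding sigma_def using abs_inner_le_1[of x y] by (intro arccos_ubound) auto

lemma cos_sigma: "norm x = 1 \<Longrightarrow> norm y = 1 \<Longrightarrow> cos (sigma x y) = inner x y"
  unfolding sigma_def using abs_inner_le_1[of x y] by (intro cos_arccos) auto

lemma sigma_self: "norm x = 1 \<Longrightarrow> sigma x x = 0"
  by (simp add: sigma_def norm_eq_sqrt_inner)

lemma sigma_eq_0_imp_eq:
  assumes "norm x = 1" "norm y = 1" "sigma x y = 0"
  shows "x = y"
proof -
  have "inner x y = 1" using cos_sigma[of x y] assms by simp
  moreover have "inner x x = 1" "inner y y = 1"
    using assms by (simp_all add: power2_norm_eq_inner[symmetric])
  ultimately have "norm (x - y) ^ 2 = 0"
    unfolding power2_norm_eq_inner by (simp add: inner_diff inner_commute)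
  then show "x = y" by simp
qed

lemma sigma_triangle:
  fixes x y z :: "real^3"
  assumes n: "norm x = 1" "norm y = 1" "norm z = 1"
  shows "sigma x z \<le> sigma x y + sigma y z"
proof (cases "sigma x y + sigma y z \<le> pi")
  case False
  then show ?thesis using sigma_le_pi[OF n(1) n(3)] by simp
next
  case True
  define \<alpha> where "\<alpha> = sigma x y"
  define \<beta> where "\<beta> = sigma y z"
  have bounds: "0 \<le> \<alpha>" "\<alpha> \<le> pi" "0 \<le> \<beta>" "\<beta> \<le> pi"
    using sigma_nonneg sigma_le_pi n unfolding \<alpha>_def \<beta>_def by auto
  have ca: "cos \<alpha> = inner x y" and cb: "cos \<beta> = inner y z"
    using cos_sigma n unfolding \<alpha>_def \<beta>_def by auto
  have unit: "inner x x = 1" "inner y y = 1" "inner z z = 1"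
    using n by (simp_all add: power2_norm_eq_inner[symmetric])
  define u where "u = x - inner x y *\<^sub>R y"
  define w where "w = z - inner y z *\<^sub>R y"
  have xz: "inner x z = inner x y * inner y z + inner u w"
    unfolding u_def w_def by (simp add: inner_diff inner_commute unit algebra_simps)
  have "norm u ^ 2 = (sin \<alpha>) ^ 2" "norm w ^ 2 = (sin \<beta>) ^ 2"
    unfolding u_def w_def power2_norm_eq_inner using sin_squared_eq[of \<alpha>] sin_squared_eq[of \<beta>] ca cb
    by (simp_all add: inner_diff inner_commute unit algebra_simps power2_eq_square)
  moreover have "0 \<le> sin \<alpha>" "0 \<le> sin \<beta>" using bounds by (auto intro: sin_ge_zero)
  ultimately have "norm u = sin \<alpha>" "norm w = sin \<beta>" by (simp_all add: power2_eq_iff_nonneg)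
  moreover have "- (norm u * norm w) \<le> inner u w"
    using Cauchy_Schwarz_ineq2[of u w] by linarith
  ultimately have "cos (\<alpha> + \<beta>) \<le> inner x z"
    using xz ca cb by (simp add: cos_add)
  then have "arccos (inner x z) \<le> arccos (cos (\<alpha> + \<beta>))"
    using abs_inner_le_1[OF n(1) n(3)] by (intro arccos_le_arccos) (auto simp: cos_ge_minus_one)
  also have "\<dots> = \<alpha> + \<beta>" using True bounds unfolding \<alpha>_def \<beta>_def by (intro arccos_cos) auto
  finally show ?thesis unfolding \<alpha>_def \<beta>_def sigma_def .
qed

lemma sigma_less_if_cos_less_inner:
  assumes "norm x = 1" "norm y = 1" "0 \<le> e" "cos e < inner x y"
  shows "sigma x y < e"
proof (cases "e \<le> pi")
  case True
  have "arccos (inner x y) < arccos (cos e)"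
    using assms abs_inner_le_1[of x y] cos_ge_minus_one[of e] by (intro arccos_less_arccos) auto
  then show ?thesis using assms True by (simp add: sigma_def arccos_cos)
next
  case False
  then show ?thesis using sigma_le_pi[OF assms(1,2)] by simp
qed

section \<open>The glued space\<close>

lemma S1_subset_Zc: "S1 \<subseteq> Zc i" by (auto simp: S1_def Zc_def)
lemma Zo_subset_Zc: "Zo i \<subseteq> Zc i" by (auto simp: Zo_def Zc_def)
lemma Zc_eq_Zo_Un_S1: "i \<in> {1,2} \<Longrightarrow> Zc i = Zo i \<union> S1" by (auto simp: S1_def Zc_def Zo_def)
lemma Zo_Int_S1: "Zo i \<inter> S1 = {}" by (auto simp: S1_def Zo_def)
lemma norm_of_Zc: "a \<in> Zc i \<Longrightarrow> norm a = 1" by (auto simp: Zc_def S2_def split: if_splits)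
lemma norm_of_Zo: "a \<in> Zo i \<Longrightarrow> norm a = 1" by (auto simp: Zo_def S2_def split: if_splits)
lemma norm_of_S1: "c \<in> S1 \<Longrightarrow> norm c = 1" by (auto simp: S1_def S2_def)
lemma Zo_third_nonzero: "a \<in> Zo i \<Longrightarrow> a$3 \<noteq> 0" by (auto simp: Zo_def split: if_splits)

locale equator_gluing =
  fixes g :: "real^3 \<Rightarrow> real^3"
  assumes g_S1: "g ` S1 = S1" and inj_g: "inj_on g S1"
begin

lemma g_in_S1: "z \<in> S1 \<Longrightarrow> g z \<in> S1"
  using g_S1 by auto

text \<open>Since g is injective, the glueing relation is already transitive: each class
  has at most two elements.\<close>
lemma zrel_eq: "zrel g = (Id \<union> glue g \<union> (glue g)\<inverse>) \<inter> (DU \<times> DU)"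
proof -
  let ?R = "glue g \<union> (glue g)\<inverse>"
  have step: "(p, r) \<in> Id \<union> ?R" if "(p, q) \<in> Id \<union> ?R" "(q, r) \<in> ?R" for p q r
    using that inj_g by (auto simp: glue_def dest: inj_onD)
  have "(p, q) \<in> Id \<union> ?R" if "(p, q) \<in> ?R\<^sup>*" for p q
    using that by (induction rule: rtrancl_induct) (simp, metis step)
  then show ?thesis unfolding zrel_def by auto
qed

lemma iota1_eq: "a \<in> Zc 1 \<Longrightarrow> iota g 1 a = {(1,a)} \<union> (if a \<in> S1 then {(2, g a)} else {})"
  using g_in_S1[of a] S1_subset_Zc[of 2]
  by (auto simp: iota_def zrel_eq glue_def DU_def)

lemma iota2_eq: "b \<in> Zc 2 \<Longrightarrow> iota g 2 b = {(2,b)} \<union> {(1,z) | z. z \<in> S1 \<and> g z = b}"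
  using S1_subset_Zc[of 1]
  by (auto simp: iota_def zrel_eq glue_def DU_def)

lemma self_in_iota: "i \<in> {1,2} \<Longrightarrow> a \<in> Zc i \<Longrightarrow> (i, a) \<in> iota g i a"
  by (auto simp: iota1_eq iota2_eq)

lemma in_iota_same_index: "i \<in> {1,2} \<Longrightarrow> b \<in> Zc i \<Longrightarrow> (i, a) \<in> iota g i b \<Longrightarrow> a = b"
  by (auto simp: iota1_eq iota2_eq split: if_splits)

lemma iota_inj: "i \<in> {1,2} \<Longrightarrow> a \<in> Zc i \<Longrightarrow> b \<in> Zc i \<Longrightarrow> iota g i a = iota g i b \<Longrightarrow> a = b"
  by (metis self_in_iota in_iota_same_index)

lemma iota2_g: "c \<in> S1 \<Longrightarrow> iota g 2 (g c) = iota g 1 c"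
proof -
  assume c: "c \<in> S1"
  then have "c \<in> Zc 1" "g c \<in> Zc 2" using S1_subset_Zc g_in_S1 by auto
  moreover have "{(1::nat, z) | z. z \<in> S1 \<and> g z = g c} = {(1, c)}"
    using inj_g c by (auto dest: inj_onD)
  ultimately show ?thesis using c by (auto simp: iota1_eq iota2_eq)
qed

lemma iota1_eq_iota2:
  assumes "a \<in> Zc 1" "b \<in> Zc 2" "iota g 1 a = iota g 2 b"
  shows "a \<in> S1 \<and> b = g a"
proof -
  have "(1, a) \<in> iota g 2 b" using assms self_in_iota[of 1 a] by simp
  then show ?thesis using assms(2) by (auto simp: iota2_eq)
qed

lemma iota_inv_iota:
  assumes "i \<in> {1,2}" "a \<in> Zc i"
  shows "iota_inv g i (iota g i a) = a"
  unfolding iota_inv_def using assms iota_inj[OF assms(1) _ assms(2)] by (intro the_equality) auto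

lemma iota_in_Z: "i \<in> {1,2} \<Longrightarrow> a \<in> Zc i \<Longrightarrow> iota g i a \<in> Z g"
  unfolding Z_def quotient_def DU_def iota_def by auto

lemma iota2_S1: "iota g 2 ` S1 = iota g 1 ` S1"
proof -
  have "iota g 2 ` S1 = (\<lambda>c. iota g 2 (g c)) ` S1" using g_S1 by (simp add: image_image[symmetric])
  also have "\<dots> = iota g 1 ` S1" by (rule image_cong) (simp_all add: iota2_g)
  finally show ?thesis .
qed

lemma Z_eq: "Z g = iota g 1 ` Zo 1 \<union> iota g 1 ` S1 \<union> iota g 2 ` Zo 2"
proof -
  have "Z g = iota g 1 ` Zc 1 \<union> iota g 2 ` Zc 2"
    unfolding Z_def quotient_def DU_def iota_def by auto
  also have "\<dots> = iota g 1 ` Zo 1 \<union> iota g 1 ` S1 \<union> iota g 2 ` Zo 2 \<union> iota g 2 ` S1"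
    using Zc_eq_Zo_Un_S1[of 1] Zc_eq_Zo_Un_S1[of 2] by auto
  finally show ?thesis using iota2_S1 by auto
qed

lemma iota2_in_iota1_image_iff:
  assumes "b \<in> Zc 2" "A = S1 \<or> A = Zc 1"
  shows "iota g 2 b \<in> iota g 1 ` A \<longleftrightarrow> b \<in> S1"
proof
  assume "iota g 2 b \<in> iota g 1 ` A"
  then obtain c where "c \<in> Zc 1" "iota g 1 c = iota g 2 b" using assms(2) S1_subset_Zc by blast
  then show "b \<in> S1" using assms(1) iota1_eq_iota2 g_in_S1 by blast
next
  assume "b \<in> S1"
  then obtain c where "c \<in> S1" "b = g c" using g_S1 by auto
  then show "iota g 2 b \<in> iota g 1 ` A" using assms S1_subset_Zc[of 1] by (auto simp: iota2_g)
qed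

lemma iota1_in_iota1_S1_iff: "a \<in> Zc 1 \<Longrightarrow> iota g 1 a \<in> iota g 1 ` S1 \<longleftrightarrow> a \<in> S1"
  using iota_inj[of 1 a] S1_subset_Zc[of 1] by auto

lemma iota1_notin_iota2_Zo: "a \<in> Zc 1 \<Longrightarrow> iota g 1 a \<notin> iota g 2 ` Zo 2"
proof
  assume "a \<in> Zc 1" "iota g 1 a \<in> iota g 2 ` Zo 2"
  then obtain b where "b \<in> Zo 2" "iota g 1 a = iota g 2 b" by auto
  then have "b \<in> S1" using \<open>a \<in> Zc 1\<close> iota1_eq_iota2 g_in_S1 Zo_subset_Zc by blast
  then show False using \<open>b \<in> Zo 2\<close> Zo_Int_S1 by blast
qed

lemma iota2_notin_iota1_Zo: "b \<in> Zc 2 \<Longrightarrow> iota g 2 b \<notin> iota g 1 ` Zo 1"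
proof
  assume "b \<in> Zc 2" "iota g 2 b \<in> iota g 1 ` Zo 1"
  then obtain a where "a \<in> Zo 1" "iota g 1 a = iota g 2 b" by auto
  then have "a \<in> S1" using \<open>b \<in> Zc 2\<close> iota1_eq_iota2 Zo_subset_Zc by blast
  then show False using \<open>a \<in> Zo 1\<close> Zo_Int_S1 by blast
qed

lemma D_iota1:
  assumes "a \<in> Zc 1" "b \<in> Zc 1" "\<not> (a \<in> S1 \<and> b \<in> S1)"
  shows "D g (iota g 1 a) (iota g 1 b) = ereal (sigma a b)"
  using assms iota1_notin_iota2_Zo iota1_in_iota1_S1_iff iota_inv_iota[of 1]
  unfolding D_def by auto

lemma D_iota2:
  assumes "a \<in> Zc 2" "b \<in> Zc 2" "\<not> (a \<in> S1 \<and> b \<in> S1)"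
  shows "D g (iota g 2 a) (iota g 2 b) = ereal (sigma a b)"
  using assms iota2_notin_iota1_Zo iota2_in_iota1_image_iff iota_inv_iota[of 2]
  unfolding D_def by auto

lemma D_iota1_S1:
  assumes "c \<in> S1" "d \<in> S1"
  shows "D g (iota g 1 c) (iota g 1 d) = ereal (min (sigma c d) (sigma (g c) (g d)))"
proof -
  have "c \<in> Zc 1" "d \<in> Zc 1" using assms S1_subset_Zc by auto
  then show ?thesis
    using assms iota1_notin_iota2_Zo iota_inv_iota[of 1] unfolding D_def by (auto simp: Let_def)
qed

lemma D_cases:
  assumes "x \<in> Z g" "y \<in> Z g"
  obtains (hemisphere) i a b where "i \<in> {1,2}" "a \<in> Zc i" "b \<in> Zc i"
      "x = iota g i a" "y = iota g i b" "D g x y = ereal (sigma a b)"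
    | (equator) c d where "c \<in> S1" "d \<in> S1" "x = iota g 1 c" "y = iota g 1 d"
      "D g x y = ereal (min (sigma c d) (sigma (g c) (g d)))"
    | (apart) "D g x y = \<infinity>"
proof -
  have sub: "iota g 1 ` S1 \<subseteq> iota g 1 ` Zc 1" "iota g 1 ` S1 \<subseteq> iota g 2 ` Zc 2"
    "iota g 1 ` Zo 1 \<subseteq> iota g 1 ` Zc 1" "iota g 2 ` Zo 2 \<subseteq> iota g 2 ` Zc 2"
    using S1_subset_Zc iota2_S1 Zo_subset_Zc by (metis image_mono)+
  consider "x \<in> iota g 1 ` Zc 1" "y \<in> iota g 1 ` Zc 1" | "x \<in> iota g 2 ` Zc 2" "y \<in> iota g 2 ` Zc 2"
    | "(x \<in> iota g 1 ` Zo 1 \<and> y \<in> iota g 2 ` Zo 2) \<or> (x \<in> iota g 2 ` Zo 2 \<and> y \<in> iota g 1 ` Zo 1)"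
  proof -
    have pieces: "(x \<in> B \<and> y \<in> B) \<or> (x \<in> E \<and> y \<in> E) \<or> (x \<in> A \<and> y \<in> C) \<or> (x \<in> C \<and> y \<in> A)"
      if "x \<in> A \<union> S \<union> C" "y \<in> A \<union> S \<union> C" "S \<subseteq> B" "S \<subseteq> E" "A \<subseteq> B" "C \<subseteq> E"
      for A S C B E :: "(nat \<times> (real^3)) set set"
      using that by blast
    show thesis using pieces[OF assms[unfolded Z_eq] sub] that by blast
  qed
  then show thesis
  proof cases
    case 1
    then obtain a b where ab: "a \<in> Zc 1" "b \<in> Zc 1" "x = iota g 1 a" "y = iota g 1 b" by auto
    then show thesis
      using that(1)[of 1 a b] that(2)[of a b] by (cases "a \<in> S1 \<and> b \<in> S1") (auto simp: D_iota1 D_iota1_S1)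
  next
    case 2
    then obtain a b where ab: "a \<in> Zc 2" "b \<in> Zc 2" "x = iota g 2 a" "y = iota g 2 b" by auto
    show thesis
    proof (cases "a \<in> S1 \<and> b \<in> S1")
      case True
      then have "a \<in> g ` S1" "b \<in> g ` S1" using g_S1 by simp_all
      then obtain c d where "c \<in> S1" "d \<in> S1" "a = g c" "b = g d" by blast
      then show thesis using that(2)[of c d] ab by (simp add: iota2_g D_iota1_S1)
    qed (use ab that(1)[of 2 a b] in \<open>auto simp: D_iota2\<close>)
  qed (use that(3) in \<open>simp add: D_def\<close>)
qed

end

section \<open>Chain distance and glued potentials\<close>

lemma D_commute: "D g x y = D g y x"
  unfolding D_def Let_def by (auto simp: sigma_commute min.commute)

definition chain_cost :: "(real^3 \<Rightarrow> real^3) \<Rightarrow> (nat \<times> (real^3)) set list \<Rightarrow> ereal" where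
  "chain_cost g xs = sum_list (map2 (D g) xs (tl xs))"

lemma chain_cost_singleton [simp]: "chain_cost g [x] = 0"
  by (simp add: chain_cost_def)

lemma chain_cost_Cons_Cons [simp]: "chain_cost g (x # y # r) = D g x y + chain_cost g (y # r)"
  by (simp add: chain_cost_def)

lemma chain_cost_append:
  "xs \<noteq> [] \<Longrightarrow> ys \<noteq> [] \<Longrightarrow> last xs = hd ys \<Longrightarrow>
    chain_cost g (xs @ tl ys) = chain_cost g xs + chain_cost g ys"
proof (induction xs rule: induct_list012)
  case (2 x)
  then show ?case by (cases ys) auto
next
  case (3 x y r)
  then show ?case by (simp add: add.assoc)
qed simp

lemma chain_cost_rev: "chain_cost g (rev xs) = chain_cost g xs"
proof (induction xs rule: induct_list012)
  case (3 x y r)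
  have "chain_cost g (rev (y # r) @ tl [y, x]) = chain_cost g (rev (y # r)) + chain_cost g [y, x]"
    by (rule chain_cost_append) (auto simp: last_rev)
  then show ?case using 3 by (simp add: D_commute add.commute)
qed simp_all

lemma dZ_le_chain_cost: "xs \<noteq> [] \<Longrightarrow> set xs \<subseteq> Z g \<Longrightarrow> dZ g (hd xs) (last xs) \<le> chain_cost g xs"
  unfolding dZ_def chain_cost_def by (rule Inf_lower) auto

lemma le_dZI:
  "(\<And>xs. xs \<noteq> [] \<Longrightarrow> set xs \<subseteq> Z g \<Longrightarrow> hd xs = x \<Longrightarrow> last xs = y \<Longrightarrow> c \<le> chain_cost g xs)
    \<Longrightarrow> c \<le> dZ g x y"
  unfolding dZ_def chain_cost_def by (rule Inf_greatest) auto

lemma dZ_commute: "dZ g x y = dZ g y x"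
proof -
  have "dZ g x y \<le> dZ g y x" for x y
  proof (rule le_dZI)
    fix xs assume "xs \<noteq> []" "set xs \<subseteq> Z g" "hd xs = y" "last xs = x"
    then show "dZ g x y \<le> chain_cost g xs"
      using dZ_le_chain_cost[of "rev xs" g] by (simp add: chain_cost_rev hd_rev last_rev)
  qed
  then show ?thesis by (metis order_antisym)
qed

definition sigma_lipschitz_on :: "(real^3) set \<Rightarrow> (real^3 \<Rightarrow> real) \<Rightarrow> bool" where
  "sigma_lipschitz_on A P \<longleftrightarrow> (\<forall>x\<in>A. \<forall>y\<in>A. \<bar>P x - P y\<bar> \<le> sigma x y)"

lemma sigma_lipschitz_onD: "sigma_lipschitz_on A P \<Longrightarrow> x \<in> A \<Longrightarrow> y \<in> A \<Longrightarrow> \<bar>P x - P y\<bar> \<le> sigma x y"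
  by (simp add: sigma_lipschitz_on_def)

lemma sigma_lipschitz_on_const: "A \<subseteq> S2 \<Longrightarrow> sigma_lipschitz_on A (\<lambda>_. c)"
  by (auto simp: sigma_lipschitz_on_def S2_def intro!: sigma_nonneg)

context equator_gluing
begin

definition glued :: "(real^3 \<Rightarrow> real) \<Rightarrow> (real^3 \<Rightarrow> real) \<Rightarrow> (nat \<times> (real^3)) set \<Rightarrow> real" where
  "glued P1 P2 x = (if x \<in> iota g 1 ` Zc 1 then P1 (iota_inv g 1 x) else P2 (iota_inv g 2 x))"

lemma glued_iota1: "a \<in> Zc 1 \<Longrightarrow> glued P1 P2 (iota g 1 a) = P1 a"
  by (simp add: glued_def iota_inv_iota)

lemma glued_iota2:
  assumes "\<forall>c\<in>S1. P2 (g c) = P1 c" "b \<in> Zc 2"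
  shows "glued P1 P2 (iota g 2 b) = P2 b"
proof (cases "b \<in> S1")
  case True
  then obtain c where "c \<in> S1" "b = g c" using g_S1 by auto
  moreover have "c \<in> Zc 1" using \<open>c \<in> S1\<close> S1_subset_Zc by auto
  ultimately show ?thesis using assms by (simp add: iota2_g glued_iota1)
next
  case False
  then show ?thesis using assms iota2_in_iota1_image_iff by (simp add: glued_def iota_inv_iota)
qed

lemma glued_D_lipschitz:
  assumes P1: "sigma_lipschitz_on (Zc 1) P1" and P2: "sigma_lipschitz_on (Zc 2) P2"
    and compat: "\<forall>c\<in>S1. P2 (g c) = P1 c" and "x \<in> Z g" "y \<in> Z g"
  shows "ereal \<bar>glued P1 P2 x - glued P1 P2 y\<bar> \<le> D g x y"
  using assms(4,5)
proof (cases rule: D_cases)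
  case (hemisphere i a b)
  then show ?thesis
    using sigma_lipschitz_onD[OF P1, of a b] sigma_lipschitz_onD[OF P2, of a b]
    by (auto simp: glued_iota1 glued_iota2[OF compat])
next
  case (equator c d)
  moreover have "c \<in> Zc 1" "d \<in> Zc 1" "g c \<in> Zc 2" "g d \<in> Zc 2"
    using equator S1_subset_Zc g_in_S1 by auto
  ultimately show ?thesis
    using sigma_lipschitz_onD[OF P1, of c d] sigma_lipschitz_onD[OF P2, of "g c" "g d"] compat
    by (simp add: glued_iota1)
qed simp

lemma glued_chain_lipschitz:
  assumes "sigma_lipschitz_on (Zc 1) P1" "sigma_lipschitz_on (Zc 2) P2" "\<forall>c\<in>S1. P2 (g c) = P1 c"
  shows "xs \<noteq> [] \<Longrightarrow> set xs \<subseteq> Z g \<Longrightarrow>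
    ereal \<bar>glued P1 P2 (hd xs) - glued P1 P2 (last xs)\<bar> \<le> chain_cost g xs"
proof (induction xs rule: induct_list012)
  case (3 x y r)
  have "ereal \<bar>glued P1 P2 x - glued P1 P2 (last (y # r))\<bar>
      \<le> ereal \<bar>glued P1 P2 x - glued P1 P2 y\<bar> + ereal \<bar>glued P1 P2 y - glued P1 P2 (last (y # r))\<bar>"
    by simp
  also have "\<dots> \<le> D g x y + chain_cost g (y # r)"
    using glued_D_lipschitz[OF assms, of x y] 3 by (intro add_mono) auto
  finally show ?case by simp
qed simp_all

lemma glued_dZ_lipschitz:
  assumes "sigma_lipschitz_on (Zc 1) P1" "sigma_lipschitz_on (Zc 2) P2" "\<forall>c\<in>S1. P2 (g c) = P1 c"
  shows "ereal \<bar>glued P1 P2 x - glued P1 P2 y\<bar> \<le> dZ g x y"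
  by (rule le_dZI) (use glued_chain_lipschitz[OF assms] in fastforce)

lemma chain_cost_nonneg: "xs \<noteq> [] \<Longrightarrow> set xs \<subseteq> Z g \<Longrightarrow> 0 \<le> chain_cost g xs"
proof -
  have "sigma_lipschitz_on (Zc i) (\<lambda>_. 0)" for i
    by (rule sigma_lipschitz_on_const) (auto simp: Zc_def)
  then show "xs \<noteq> [] \<Longrightarrow> set xs \<subseteq> Z g \<Longrightarrow> 0 \<le> chain_cost g xs"
    using glued_chain_lipschitz[of "\<lambda>_. 0" "\<lambda>_. 0" xs] by (simp add: glued_def zero_ereal_def)
qed

lemma dZ_nonneg: "0 \<le> dZ g x y"
  by (rule le_dZI) (rule chain_cost_nonneg)

lemma dZ_self: "x \<in> Z g \<Longrightarrow> dZ g x x = 0"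
  using dZ_le_chain_cost[of "[x]" g] dZ_nonneg[of x x] by simp

lemma dZ_triangle:
  assumes "x \<in> Z g" "y \<in> Z g" "z \<in> Z g"
  shows "dZ g x z \<le> dZ g x y + dZ g y z"
proof -
  define A where "A = {chain_cost g xs | xs. xs \<noteq> [] \<and> set xs \<subseteq> Z g \<and> hd xs = x \<and> last xs = y}"
  define B where "B = {chain_cost g xs | xs. xs \<noteq> [] \<and> set xs \<subseteq> Z g \<and> hd xs = y \<and> last xs = z}"
  have dA: "dZ g x y = Inf A" and dB: "dZ g y z = Inf B"
    unfolding A_def B_def dZ_def chain_cost_def by simp_all
  have "chain_cost g [x, y] \<in> A" "chain_cost g [y, z] \<in> B"
    unfolding A_def B_def using assms by force+
  then have ne: "A \<noteq> {}" "B \<noteq> {}" by auto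
  have nonneg: "0 \<le> a" if "a \<in> A \<union> B" for a
    using that chain_cost_nonneg unfolding A_def B_def by auto
  have concat: "dZ g x z \<le> a + b" if "a \<in> A" "b \<in> B" for a b
  proof -
    obtain xs where xs: "a = chain_cost g xs" "xs \<noteq> []" "set xs \<subseteq> Z g" "hd xs = x" "last xs = y"
      using \<open>a \<in> A\<close> unfolding A_def by blast
    obtain ys where ys: "b = chain_cost g ys" "ys \<noteq> []" "set ys \<subseteq> Z g" "hd ys = y" "last ys = z"
      using \<open>b \<in> B\<close> unfolding B_def by blast
    have "dZ g (hd (xs @ tl ys)) (last (xs @ tl ys)) \<le> chain_cost g (xs @ tl ys)"
      using xs ys by (intro dZ_le_chain_cost) (auto dest: list.set_sel(2))
    moreover have "hd (xs @ tl ys) = x" "last (xs @ tl ys) = z"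
      using xs ys by (cases ys; cases "tl ys"; auto)+
    ultimately show ?thesis using chain_cost_append[of xs ys g] xs ys by simp
  qed
  have "dZ g x z \<le> Inf A + b" if "b \<in> B" for b
  proof -
    have "dZ g x z \<le> (INF a\<in>A. a + b)" using concat that by (auto intro: INF_greatest)
    also have "\<dots> = Inf A + b"
      using ne nonneg that by (subst INF_ereal_add_left) auto
    finally show ?thesis .
  qed
  then have "dZ g x z \<le> (INF b\<in>B. Inf A + b)" by (auto intro: INF_greatest)
  also have "\<dots> = Inf A + Inf B"
    using ne nonneg dA dZ_nonneg[of x y] by (subst INF_ereal_add_right) auto
  finally show ?thesis using dA dB by simp
qed

lemma dZ_eq_0_trans:
  "x \<in> Z g \<Longrightarrow> y \<in> Z g \<Longrightarrow> z \<in> Z g \<Longrightarrow> dZ g x y = 0 \<Longrightarrow> dZ g y z = 0 \<Longrightarrow> dZ g x z = 0"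
  using dZ_triangle[of x y z] dZ_nonneg[of x z] by simp

lemma D_iota_le_sigma:
  assumes "i \<in> {1,2}" "a \<in> Zc i" "b \<in> Zc i"
  shows "D g (iota g i a) (iota g i b) \<le> ereal (sigma a b)"
proof (cases "a \<in> S1 \<and> b \<in> S1")
  case True
  consider "i = 1" | "i = 2" using assms(1) by blast
  then show ?thesis
  proof cases
    case 1
    then show ?thesis using True by (simp add: D_iota1_S1)
  next
    case 2
    have "a \<in> g ` S1" "b \<in> g ` S1" using True g_S1 by simp_all
    then obtain c d where "c \<in> S1" "d \<in> S1" "a = g c" "b = g d" by blast
    then show ?thesis using 2 by (simp add: iota2_g D_iota1_S1)
  qed
next
  case False
  then show ?thesis using assms by (auto simp: D_iota1 D_iota2)
qed

lemma dZ_iota_le_sigma: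
  assumes "i \<in> {1,2}" "a \<in> Zc i" "b \<in> Zc i"
  shows "dZ g (iota g i a) (iota g i b) \<le> ereal (sigma a b)"
  using dZ_le_chain_cost[of "[iota g i a, iota g i b]" g] D_iota_le_sigma[OF assms] iota_in_Z assms
  by simp

end

section \<open>Quotient and local isometry\<close>

lemma sigma_lipschitz_on_min_sigma:
  assumes "norm a = 1" "A \<subseteq> S2"
  shows "sigma_lipschitz_on A (\<lambda>y. min (sigma a y) h)"
  unfolding sigma_lipschitz_on_def
proof (intro ballI)
  fix x y assume "x \<in> A" "y \<in> A"
  then have "norm x = 1" "norm y = 1" using assms(2) by (auto simp: S2_def)
  then have "sigma a x \<le> sigma a y + sigma y x" "sigma a y \<le> sigma a x + sigma x y"
    using sigma_triangle assms(1) by auto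
  then show "\<bar>min (sigma a x) h - min (sigma a y) h\<bar> \<le> sigma x y"
    using sigma_commute[of x y] by (auto simp: abs_le_iff min_def)
qed

definition equator_gap :: "real^3 \<Rightarrow> real" where
  "equator_gap a = arccos (sqrt (1 - (a$3)^2))"

lemma inner_real3: "inner (a::real^3) c = a$1*c$1 + a$2*c$2 + a$3*c$3"
  by (simp add: inner_vec_def sum_3)

lemma norm_real3_eq_1: "norm (a::real^3) = 1 \<Longrightarrow> (a$1)^2 + (a$2)^2 + (a$3)^2 = 1"
  using power2_norm_eq_inner[of a] by (simp add: inner_real3 power2_eq_square)

lemma equator_gap_le_sigma:
  assumes a: "norm a = 1" and c: "c \<in> S1"
  shows "equator_gap a \<le> sigma a c"
proof -
  have c3: "c$3 = 0" "(c$1)^2 + (c$2)^2 = 1"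
    using c norm_real3_eq_1[of c] by (auto simp: S1_def S2_def)
  have "(a$1*c$1 + a$2*c$2)^2 \<le> ((a$1)^2 + (a$2)^2) * ((c$1)^2 + (c$2)^2)"
    using sum_power2_ge_zero[of "a$1*c$2 - a$2*c$1" 0]
    by (simp add: power2_eq_square algebra_simps)
  then have "(inner a c)^2 \<le> 1 - (a$3)^2" using c3 norm_real3_eq_1[OF a] by (simp add: inner_real3)
  then have "inner a c \<le> sqrt (1 - (a$3)^2)" by (rule real_le_rsqrt)
  moreover have "sqrt (1 - (a$3)^2) \<le> 1" by simp
  ultimately have "arccos (sqrt (1 - (a$3)^2)) \<le> arccos (inner a c)"
    using abs_inner_le_1[OF a norm_of_S1[OF c]] by (intro arccos_le_arccos) auto
  then show ?thesis by (simp add: equator_gap_def sigma_def)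
qed

lemma sqrt_one_minus_third_bounds:
  fixes a :: "real^3"
  assumes "norm a = 1" shows "0 \<le> sqrt (1 - (a$3)^2)" "sqrt (1 - (a$3)^2) \<le> 1"
proof -
  have "0 \<le> 1 - (a$3)^2"
    using norm_real3_eq_1[OF assms] zero_le_power2[of "a$1"] zero_le_power2[of "a$2"] by linarith
  then show "0 \<le> sqrt (1 - (a$3)^2)" by simp
qed simp

lemma equator_gap_le_pi: "norm a = 1 \<Longrightarrow> equator_gap a \<le> pi"
  using sqrt_one_minus_third_bounds[of a] unfolding equator_gap_def
  by (intro arccos_ubound) linarith+

lemma equator_gap_pos:
  assumes "norm a = 1" "a$3 \<noteq> 0"
  shows "0 < equator_gap a"
proof -
  have "sqrt (1 - (a$3)^2) < 1" using assms(2) by simp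
  then have "arccos 1 < arccos (sqrt (1 - (a$3)^2))"
    using sqrt_one_minus_third_bounds[OF assms(1)] by (intro arccos_less_arccos) linarith+
  then show ?thesis by (simp add: equator_gap_def)
qed

context equator_gluing
begin

lemma zero_rel_equiv: "equiv (Z g) (zero_rel g)"
proof (rule equivI)
  show "refl_on (Z g) (zero_rel g)"
    unfolding refl_on_def zero_rel_def using dZ_self by auto
  show "sym (zero_rel g)"
    unfolding sym_def zero_rel_def using dZ_commute by auto
  show "trans (zero_rel g)"
  proof (rule transI)
    fix x y z assume "(x, y) \<in> zero_rel g" "(y, z) \<in> zero_rel g"
    then show "(x, z) \<in> zero_rel g" using dZ_eq_0_trans[of x y z] by (simp add: zero_rel_def)
  qed
qed (auto simp: zero_rel_def)

lemma Q_eq_iff: "x \<in> Z g \<Longrightarrow> y \<in> Z g \<Longrightarrow> Q g x = Q g y \<longleftrightarrow> dZ g x y = 0"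
  unfolding Q_def using equiv_class_eq_iff[OF zero_rel_equiv, of x y] by (simp add: zero_rel_def)

lemma dZ_le_if_dZ_eq_0:
  assumes "x \<in> Z g" "x' \<in> Z g" "y \<in> Z g" "y' \<in> Z g" "dZ g x x' = 0" "dZ g y y' = 0"
  shows "dZ g x' y' \<le> dZ g x y"
proof -
  have "dZ g x' y' \<le> dZ g x' x + dZ g x y'" using dZ_triangle assms by blast
  also have "\<dots> \<le> dZ g x' x + (dZ g x y + dZ g y y')" using dZ_triangle assms by (intro add_left_mono) blast
  finally show ?thesis using assms dZ_commute[of g x' x] by simp
qed

lemma dZt_Q: assumes "x \<in> Z g" "y \<in> Z g" shows "dZt g (Q g x) (Q g y) = dZ g x y"
proof -
  define x' where "x' = (SOME u. u \<in> Q g x)"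
  define y' where "y' = (SOME u. u \<in> Q g y)"
  have "x \<in> Q g x" "y \<in> Q g y" using assms dZ_self by (auto simp: Q_def zero_rel_def)
  then have "x' \<in> Q g x" "y' \<in> Q g y" unfolding x'_def y'_def by (auto intro: someI)
  then have "x' \<in> Z g" "y' \<in> Z g" "dZ g x x' = 0" "dZ g y y' = 0" "dZ g x' x = 0" "dZ g y' y = 0"
    by (auto simp: Q_def zero_rel_def dZ_commute)
  then have "dZ g x' y' \<le> dZ g x y" "dZ g x y \<le> dZ g x' y'"
    using assms dZ_le_if_dZ_eq_0 by blast+
  then have "dZ g x' y' = dZ g x y" by (rule antisym)
  then show ?thesis unfolding dZt_def x'_def y'_def .
qed

lemma dZt_iota_t:
  "i \<in> {1,2} \<Longrightarrow> a \<in> Zc i \<Longrightarrow> b \<in> Zc i \<Longrightarrow>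
    dZt g (iota_t g i a) (iota_t g i b) = dZ g (iota g i a) (iota g i b)"
  by (simp add: iota_t_def dZt_Q iota_in_Z)

lemma dZt_iota_t_le_sigma:
  "i \<in> {1,2} \<Longrightarrow> a \<in> Zc i \<Longrightarrow> b \<in> Zc i \<Longrightarrow> dZt g (iota_t g i a) (iota_t g i b) \<le> ereal (sigma a b)"
  by (simp add: dZt_iota_t dZ_iota_le_sigma)

text \<open>The lower bound comes from the potential min (sigma a _) h on hemisphere i, glued
  to the constant h on the other hemisphere.\<close>
lemma min_sigma_le_dZ:
  assumes i: "i \<in> {1,2}" and a: "a \<in> Zo i" and b: "b \<in> Zc i"
    and h: "0 \<le> h" "\<forall>c\<in>S1. h \<le> sigma a c"
  shows "ereal (min (sigma a b) h) \<le> dZ g (iota g i a) (iota g i b)"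
proof -
  define P where "P = (\<lambda>y. min (sigma a y) h)"
  have na: "norm a = 1" using norm_of_Zo[OF a] .
  have P: "sigma_lipschitz_on (Zc j) P" and const: "sigma_lipschitz_on (Zc j) (\<lambda>_. h)" for j
    unfolding P_def using na by (auto intro!: sigma_lipschitz_on_min_sigma sigma_lipschitz_on_const simp: Zc_def)
  have P_S1: "P c = h" if "c \<in> S1" for c using h that by (simp add: P_def)
  have Pa: "P a = 0" and Pb: "0 \<le> P b"
    using sigma_self[OF na] sigma_nonneg[OF na norm_of_Zc[OF b]] h by (simp_all add: P_def)
  have aZ: "a \<in> Zc i" using a Zo_subset_Zc by auto
  consider "i = 1" | "i = 2" using i by blast
  then have "ereal \<bar>P a - P b\<bar> \<le> dZ g (iota g i a) (iota g i b)"
  proof cases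
    case 1
    then show ?thesis
      using glued_dZ_lipschitz[OF P const, of "iota g 1 a" "iota g 1 b"] aZ b P_S1
      by (simp add: glued_iota1)
  next
    case 2
    have compat: "\<forall>c\<in>S1. P (g c) = h" using P_S1 g_in_S1 by simp
    then show ?thesis
      using glued_dZ_lipschitz[OF const P compat, of "iota g 2 a" "iota g 2 b"] aZ b 2
      by (simp add: glued_iota2)
  qed
  then show ?thesis using Pa Pb by (simp add: P_def)
qed

lemma dZ_eq_0_imp_eq:
  assumes i: "i \<in> {1,2}" and a: "a \<in> Zo i" and b: "b \<in> Zc i"
    and zero: "dZ g (iota g i a) (iota g i b) = 0"
  shows "b = a"
proof -
  have na: "norm a = 1" using norm_of_Zo[OF a] .
  have gap: "0 < equator_gap a" using equator_gap_pos[OF na Zo_third_nonzero[OF a]] .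
  have "ereal (min (sigma a b) (equator_gap a)) \<le> 0"
    using min_sigma_le_dZ[OF i a b, of "equator_gap a"] gap equator_gap_le_sigma[OF na] zero by simp
  then have "sigma a b = 0" using gap sigma_nonneg[OF na norm_of_Zc[OF b]] by (simp add: min_def split: if_splits)
  then show ?thesis using sigma_eq_0_imp_eq[OF na norm_of_Zc[OF b]] by simp
qed

lemma iota_t_local_isometry:
  assumes i: "i \<in> {1,2}" and x: "x \<in> Zo i"
  shows "\<exists>U. open U \<and> x \<in> U \<and>
    (\<forall>a \<in> U \<inter> Zo i. \<forall>b \<in> U \<inter> Zo i. dZt g (iota_t g i a) (iota_t g i b) = ereal (sigma a b))"
proof -
  have nx: "norm x = 1" using norm_of_Zo[OF x] .
  define e where "e = equator_gap x / 3"
  have e: "0 < e" "e < pi"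
    using equator_gap_pos[OF nx Zo_third_nonzero[OF x]] equator_gap_le_pi[OF nx] by (simp_all add: e_def)
  define U where "U = {y. cos e < inner x y}"
  have "open U" unfolding U_def by (rule open_halfspace_gt)
  moreover have "x \<in> U"
    using cos_monotone_0_pi[of 0 e] e power2_norm_eq_inner[of x] nx by (simp add: U_def)
  moreover have "dZt g (iota_t g i a) (iota_t g i b) = ereal (sigma a b)"
    if a: "a \<in> U \<inter> Zo i" and b: "b \<in> U \<inter> Zo i" for a b
  proof -
    have na: "norm a = 1" "norm b = 1" using a b norm_of_Zo by auto
    have near: "sigma x a < e" "sigma x b < e"
      using a b e nx na sigma_less_if_cos_less_inner unfolding U_def by auto
    have "2 * e \<le> sigma a c" if c: "c \<in> S1" for c
      using sigma_triangle[OF nx na(1) norm_of_S1[OF c]] equator_gap_le_sigma[OF nx c] near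
      unfolding e_def by simp
    moreover have ab: "a \<in> Zc i" "b \<in> Zc i" using a b Zo_subset_Zc by auto
    ultimately have "ereal (min (sigma a b) (2 * e)) \<le> dZ g (iota g i a) (iota g i b)"
      using min_sigma_le_dZ[OF i, of a b "2 * e"] a e by simp
    moreover have "sigma a b < 2 * e"
      using sigma_triangle[OF na(1) nx na(2)] near sigma_commute[of a x] by simp
    ultimately show ?thesis
      using dZt_iota_t_le_sigma[OF i ab] dZt_iota_t[OF i ab] by (auto intro: antisym)
  qed
  ultimately show ?thesis by blast
qed

lemma iota_t_fiber_Zo:
  assumes i: "i \<in> {1,2}" and a: "a \<in> Zo i"
  shows "{b \<in> Zc i. iota_t g i b = iota_t g i a} = {a}"
proof -
  have "b = a" if "b \<in> Zc i" "iota_t g i b = iota_t g i a" for b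
    using that a i Zo_subset_Zc Q_eq_iff[of "iota g i a" "iota g i b"] iota_in_Z dZ_eq_0_imp_eq
    unfolding iota_t_def by (metis subsetD)
  then show ?thesis using a Zo_subset_Zc by auto
qed

end

section \<open>Arc costs along the equator\<close>

fun partition_cost :: "(real \<Rightarrow> real) \<Rightarrow> real list \<Rightarrow> real" where
  "partition_cost F (a # b # r) = min (b - a) (F b - F a) + partition_cost F (b # r)"
| "partition_cost F _ = 0"

definition partitions :: "real \<Rightarrow> real \<Rightarrow> real list set" where
  "partitions s t = {ts. ts \<noteq> [] \<and> sorted ts \<and> hd ts = s \<and> last ts = t}"

text \<open>The cheapest way from eqpt s to eqpt t along the equator of Z, where each step may be
  measured on whichever hemisphere makes it shorter; F is the lift of the glueing map.\<close>
definition arc_cost :: "(real \<Rightarrow> real) \<Rightarrow> real \<Rightarrow> real \<Rightarrow> real" where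
  "arc_cost F s t = Inf (partition_cost F ` partitions s t)"

lemma partition_cost_append:
  "xs \<noteq> [] \<Longrightarrow> ys \<noteq> [] \<Longrightarrow> last xs = hd ys \<Longrightarrow>
    partition_cost F (xs @ tl ys) = partition_cost F xs + partition_cost F ys"
proof (induction xs rule: induct_list012)
  case (2 x)
  then show ?case by (cases ys) auto
qed simp_all

lemma sorted_le_last: "sorted xs \<Longrightarrow> x \<in> set xs \<Longrightarrow> x \<le> last xs"
  by (induction xs) (auto dest: last_in_set)

lemma sorted_append_tl:
  "sorted xs \<Longrightarrow> sorted ys \<Longrightarrow> ys \<noteq> [] \<Longrightarrow> last xs = hd ys \<Longrightarrow> sorted (xs @ tl ys)"
  by (cases ys) (auto simp: sorted_append dest: sorted_le_last intro: order_trans)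

lemma partitions_append: "xs \<in> partitions s t \<Longrightarrow> ys \<in> partitions t w \<Longrightarrow> xs @ tl ys \<in> partitions s w"
  unfolding partitions_def using sorted_append_tl[of xs ys] by (cases ys; cases "tl ys") auto

lemma two_point_partition: "s \<le> t \<Longrightarrow> [s, t] \<in> partitions s t"
  by (simp add: partitions_def)

lemma partition_costs_shift:
  assumes "\<And>x. F (x + c) = F x + c"
  shows "partition_cost F ` partitions s t \<subseteq> partition_cost F ` partitions (s + c) (t + c)"
proof
  fix y assume "y \<in> partition_cost F ` partitions s t"
  then obtain ts where ts: "ts \<in> partitions s t" "y = partition_cost F ts" by auto
  have "map (\<lambda>x. x + c) ts \<in> partitions (s + c) (t + c)"
    using ts(1) by (auto simp: partitions_def sorted_map hd_map last_map)
  moreover have "partition_cost F (map (\<lambda>x. x + c) ts) = y"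
    unfolding ts(2) by (induction ts rule: induct_list012) (auto simp: assms)
  ultimately show "y \<in> partition_cost F ` partitions (s + c) (t + c)" by (metis image_eqI)
qed

lemma min_le_arccos_cos_diff:
  fixes x y p q :: real
  assumes "x \<le> y" "y \<le> x + 2*pi" "p \<le> y - x" "q \<le> x + 2*pi - y"
  shows "min p q \<le> arccos (cos (x - y))"
proof (cases "y - x \<le> pi")
  case True
  then have "arccos (cos (x - y)) = y - x" using assms by (subst arccos_cos_eq_abs) auto
  then show ?thesis using assms by simp
next
  case False
  have "arccos (cos (x - y)) = arccos (cos (x - y + 2*pi))" by simp
  also have "\<dots> = x + 2*pi - y" using assms False by (subst arccos_cos_eq_abs) auto
  finally show ?thesis using assms by simp
qed

locale circle_lift =
  fixes F :: "real \<Rightarrow> real"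
  assumes mono_F: "mono F" and F_periodic: "\<And>t. F (t + 2*pi) = F t + 2*pi"
begin

lemma partition_cost_nonneg: "sorted ts \<Longrightarrow> 0 \<le> partition_cost F ts"
proof (induction ts rule: induct_list012)
  case (3 a b r)
  then have "F a \<le> F b" "a \<le> b" using mono_F by (auto simp: mono_def)
  then show ?case using 3 by simp
qed auto

lemma arc_cost_le_partition_cost: "ts \<in> partitions s t \<Longrightarrow> arc_cost F s t \<le> partition_cost F ts"
  unfolding arc_cost_def
  by (rule cInf_lower) (auto intro!: bdd_belowI[of _ 0] partition_cost_nonneg simp: partitions_def)

lemma le_arc_costI:
  "s \<le> t \<Longrightarrow> (\<And>ts. ts \<in> partitions s t \<Longrightarrow> c \<le> partition_cost F ts) \<Longrightarrow> c \<le> arc_cost F s t"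
  unfolding arc_cost_def using two_point_partition[of s t] by (intro cInf_greatest) auto

lemma arc_cost_nonneg: "s \<le> t \<Longrightarrow> 0 \<le> arc_cost F s t"
  by (rule le_arc_costI) (auto simp: partitions_def intro: partition_cost_nonneg)

lemma arc_cost_le: "s \<le> t \<Longrightarrow> arc_cost F s t \<le> min (t - s) (F t - F s)"
  using arc_cost_le_partition_cost[OF two_point_partition[of s t]] by simp

lemma arc_cost_self: "arc_cost F s s = 0"
  using arc_cost_le[of s s] arc_cost_nonneg[of s s] by simp

lemma arc_cost_triangle:
  assumes "s \<le> t" "t \<le> w"
  shows "arc_cost F s w \<le> arc_cost F s t + arc_cost F t w"
proof -
  have concat: "arc_cost F s w \<le> partition_cost F xs + partition_cost F ys"
    if "xs \<in> partitions s t" "ys \<in> partitions t w" for xs ys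
    using arc_cost_le_partition_cost[OF partitions_append[OF that]]
      partition_cost_append[of xs ys F] that by (simp add: partitions_def)
  have "arc_cost F s w - partition_cost F ys \<le> arc_cost F s t" if "ys \<in> partitions t w" for ys
    using concat[OF _ that] assms by (intro le_arc_costI) force+
  then have "arc_cost F s w - arc_cost F s t \<le> arc_cost F t w"
    using assms by (intro le_arc_costI) force+
  then show ?thesis by simp
qed

lemma arc_cost_split_le_partition_cost:
  "sorted (a # r) \<Longrightarrow> a \<le> t \<Longrightarrow> t \<le> last (a # r) \<Longrightarrow>
    arc_cost F a t + arc_cost F t (last (a # r)) \<le> partition_cost F (a # r)"
proof (induction r arbitrary: a)
  case Nil
  then show ?case by (simp add: arc_cost_self)
next
  case (Cons b r)
  define w where "w = last (b # r)"
  have ab: "a \<le> b" and sb: "sorted (b # r)" and bw: "b \<le> w" and tw: "t \<le> w"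
    using Cons.prems by (auto simp: w_def dest: last_in_set)
  have last_a: "last (a # b # r) = w" by (simp add: w_def)
  show ?case
  proof (cases "b \<le> t")
    case True
    have "arc_cost F b t + arc_cost F t w \<le> partition_cost F (b # r)"
      using Cons.IH[OF sb True] Cons.prems(3) by (simp add: w_def)
    moreover have "arc_cost F a t \<le> arc_cost F a b + arc_cost F b t" using arc_cost_triangle ab True by simp
    moreover have "arc_cost F a b \<le> min (b - a) (F b - F a)" using arc_cost_le ab by blast
    ultimately show ?thesis unfolding last_a partition_cost.simps by linarith
  next
    case False
    have "arc_cost F b w \<le> partition_cost F (b # r)"
      using sb by (intro arc_cost_le_partition_cost) (simp add: partitions_def w_def)
    moreover have "arc_cost F t w \<le> arc_cost F t b + arc_cost F b w"
      using arc_cost_triangle False bw by simp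
    moreover have "arc_cost F a t \<le> min (t - a) (F t - F a)" "arc_cost F t b \<le> min (b - t) (F b - F t)"
      using arc_cost_le Cons.prems(2) False by auto
    moreover have "min (t - a) (F t - F a) + min (b - t) (F b - F t) \<le> min (b - a) (F b - F a)"
      by (simp add: min_def)
    ultimately show ?thesis unfolding last_a partition_cost.simps by linarith
  qed
qed

lemma arc_cost_add:
  assumes "s \<le> t" "t \<le> w"
  shows "arc_cost F s w = arc_cost F s t + arc_cost F t w"
proof -
  have "arc_cost F s t + arc_cost F t w \<le> arc_cost F s w"
  proof (rule le_arc_costI)
    fix ts assume "ts \<in> partitions s w"
    then obtain r where "ts = s # r" "sorted (s # r)" "last (s # r) = w"
      unfolding partitions_def by (cases ts) auto
    then show "arc_cost F s t + arc_cost F t w \<le> partition_cost F ts"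
      using arc_cost_split_le_partition_cost[of s r t] assms by simp
  qed (use assms in simp)
  then show ?thesis using arc_cost_triangle[OF assms] by simp
qed

lemma arc_cost_periodic: "arc_cost F (s + 2*pi) (t + 2*pi) = arc_cost F s t"
proof -
  have "F (x + - (2*pi)) = F x + - (2*pi)" for x
    using F_periodic[of "x - 2*pi"] by simp
  from partition_costs_shift[of F "- (2*pi)", OF this, of "s + 2*pi" "t + 2*pi"]
    partition_costs_shift[of F "2*pi", OF F_periodic, of s t]
  have "partition_cost F ` partitions (s + 2*pi) (t + 2*pi) = partition_cost F ` partitions s t"
    by simp
  then show ?thesis unfolding arc_cost_def by simp
qed

definition tent :: "real \<Rightarrow> real \<Rightarrow> real" where
  "tent u t = min (arc_cost F u t) (arc_cost F t (u + 2*pi))"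

lemma tent_self: "tent u u = 0"
  unfolding tent_def using arc_cost_self arc_cost_nonneg[of u "u + 2*pi"] by (simp add: min_def)

lemma tent_nonneg: "u \<le> t \<Longrightarrow> t \<le> u + 2*pi \<Longrightarrow> 0 \<le> tent u t"
  unfolding tent_def using arc_cost_nonneg[of u t] arc_cost_nonneg[of t "u + 2*pi"] by simp

lemma tent_diff_le:
  assumes "u \<le> t" "t \<le> t'" "t' \<le> u + 2*pi"
  shows "\<bar>tent u t - tent u t'\<bar> \<le> min (arc_cost F t t') (arc_cost F t' (t + 2*pi))"
proof -
  define A B x where "A = arc_cost F u t" and "B = arc_cost F t' (u + 2*pi)" and "x = arc_cost F t t'"
  have "arc_cost F u t' = A + x" "arc_cost F t (u + 2*pi) = x + B"
    unfolding A_def B_def x_def using arc_cost_add[of u t t'] arc_cost_add[of t t' "u + 2*pi"] assms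
    by simp_all
  moreover have "arc_cost F t' (t + 2*pi) = B + A"
    using arc_cost_add[of t' "u + 2*pi" "t + 2*pi"] assms arc_cost_periodic[of u t] by (simp add: A_def B_def)
  moreover have "0 \<le> A" "0 \<le> x" "0 \<le> B" unfolding A_def x_def B_def using arc_cost_nonneg assms by auto
  ultimately show ?thesis unfolding tent_def A_def[symmetric] B_def[symmetric] x_def[symmetric]
    by (simp add: min_def abs_le_iff)
qed

lemma tent_diff_le_arccos_cos:
  assumes "u \<le> t" "t \<le> t'" "t' \<le> u + 2*pi"
  shows "\<bar>tent u t - tent u t'\<bar> \<le> arccos (cos (t - t'))"
    and "\<bar>tent u t - tent u t'\<bar> \<le> arccos (cos (F t - F t'))"
proof -
  have tt: "t' \<le> t + 2*pi" using assms by simp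
  have "F t \<le> F t'" "F t' \<le> F (t + 2*pi)"
    using mono_F assms tt by (auto simp: mono_def)
  then have "F t \<le> F t'" "F t' \<le> F t + 2*pi" by (simp_all add: F_periodic)
  moreover have "arc_cost F t t' \<le> t' - t" "arc_cost F t t' \<le> F t' - F t"
    "arc_cost F t' (t + 2*pi) \<le> t + 2*pi - t'" "arc_cost F t' (t + 2*pi) \<le> F t + 2*pi - F t'"
    using arc_cost_le[of t t'] arc_cost_le[OF tt] F_periodic[of t] assms by auto
  ultimately have "min (arc_cost F t t') (arc_cost F t' (t + 2*pi)) \<le> arccos (cos (t - t'))"
    "min (arc_cost F t t') (arc_cost F t' (t + 2*pi)) \<le> arccos (cos (F t - F t'))"
    using assms tt by (auto intro!: min_le_arccos_cos_diff)
  then show "\<bar>tent u t - tent u t'\<bar> \<le> arccos (cos (t - t'))"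
    and "\<bar>tent u t - tent u t'\<bar> \<le> arccos (cos (F t - F t'))"
    using tent_diff_le[OF assms] by linarith+
qed

lemma tent_pos:
  assumes "u \<le> s1" "s1 \<le> v" "v \<le> s2" "s2 \<le> u + 2*pi"
    and "0 < arc_cost F u s1" "0 < arc_cost F s2 (u + 2*pi)"
  shows "0 < tent u v"
  using assms arc_cost_add[of u s1 v] arc_cost_add[of v s2 "u + 2*pi"]
    arc_cost_nonneg[of s1 v] arc_cost_nonneg[of v s2]
  unfolding tent_def by simp

end

section \<open>Angles on the equator\<close>

lemma eqpt_nth [simp]: "eqpt t $ 1 = cos t" "eqpt t $ 2 = sin t" "eqpt t $ 3 = 0"
  by (simp_all add: eqpt_def)

lemma continuous_on_eqpt: "continuous_on A eqpt"
proof -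
  have eq: "eqpt = (\<lambda>t. cos t *\<^sub>R vector [1,0,0] + sin t *\<^sub>R vector [0,1,0])"
    by (simp add: fun_eq_iff vec_eq_iff forall_3)
  show ?thesis unfolding eq by (intro continuous_intros)
qed

lemma inner_eqpt: "inner (eqpt s) (eqpt t) = cos (s - t)"
  by (simp add: inner_real3 cos_diff)

lemma eqpt_in_S1: "eqpt t \<in> S1"
  using inner_eqpt[of t t] by (simp add: S1_def S2_def norm_eq_sqrt_inner)

lemma sigma_eqpt: "sigma (eqpt s) (eqpt t) = arccos (cos (s - t))"
  by (simp add: sigma_def inner_eqpt)

lemma arccos_cos_le_abs: "arccos (cos x) \<le> \<bar>x\<bar>"
  using arccos_ubound[of "cos x"] by (cases "\<bar>x\<bar> \<le> pi") (auto simp: arccos_cos_eq_abs)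

lemma eqpt_minus_int_2pi: "eqpt (t - of_int k * (2*pi)) = eqpt t"
proof -
  have "cos (of_int k * (2*pi)) = 1" "sin (of_int k * (2*pi)) = 0"
    using cos_int_2pin[of k] sin_int_2pin[of k] by (simp_all add: mult.commute)
  then show ?thesis by (simp add: eqpt_def cos_diff sin_diff)
qed

lemma eqpt_add_2pi: "eqpt (t + 2*pi) = eqpt t"
  using eqpt_minus_int_2pi[of "t + 2*pi" 1] by simp

lemma S1_eq_eqpt_image:
  assumes "c \<in> S1"
  obtains t where "u \<le> t" "t < u + 2*pi" "eqpt t = c"
proof -
  have "c$3 = 0" "(c$1)^2 + (c$2)^2 = 1"
    using assms norm_real3_eq_1[of c] by (auto simp: S1_def S2_def)
  moreover obtain t0 where "c$1 = cos t0" "c$2 = sin t0"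
    using sincos_total_2pi \<open>(c$1)^2 + (c$2)^2 = 1\<close> by metis
  ultimately have "eqpt t0 = c" by (simp add: vec_eq_iff forall_3)
  define k where "k = \<lfloor>(t0 - u) / (2*pi)\<rfloor>"
  have "of_int k * (2*pi) \<le> t0 - u" "t0 - u < (of_int k + 1) * (2*pi)"
    unfolding k_def by (simp_all add: floor_divide_lower floor_divide_upper)
  then show ?thesis
    using that[of "t0 - of_int k * (2*pi)"] \<open>eqpt t0 = c\<close> eqpt_minus_int_2pi by (simp add: algebra_simps)
qed

lemma eqpt_inj:
  assumes "u \<le> s" "s < u + 2*pi" "u \<le> t" "t < u + 2*pi" "eqpt s = eqpt t"
  shows "s = t"
proof -
  have "cos (s - t) = 1" using inner_eqpt[of s t] inner_eqpt[of t t] assms(5) by simp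
  then obtain n :: int where n: "s - t = of_int n * 2 * pi" by (auto simp: cos_one_2pi_int)
  have "\<bar>s - t\<bar> < 2 * pi" using assms by (simp add: abs_less_iff)
  then have "\<bar>of_int n\<bar> * (2 * pi) < 1 * (2 * pi)" using n by (simp add: abs_mult)
  then have "\<bar>of_int n\<bar> < (1::real)" by (rule mult_right_less_imp_less) simp
  then have "n = 0" by linarith
  then show ?thesis using n by simp
qed

definition equator_angle :: "real \<Rightarrow> real^3 \<Rightarrow> real" where
  "equator_angle u c = (SOME t. u \<le> t \<and> t < u + 2*pi \<and> eqpt t = c)"

lemma equator_angle:
  "c \<in> S1 \<Longrightarrow> u \<le> equator_angle u c \<and> equator_angle u c < u + 2*pi \<and> eqpt (equator_angle u c) = c"
  unfolding equator_angle_def by (rule someI_ex) (metis S1_eq_eqpt_image)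

lemma equator_angle_eqpt: "u \<le> t \<Longrightarrow> t < u + 2*pi \<Longrightarrow> equator_angle u (eqpt t) = t"
  using equator_angle[OF eqpt_in_S1, of u t] eqpt_inj[of u _ t] by blast

lemma closed_S1: "closed S1"
proof -
  have "S1 = sphere 0 1 \<inter> {x. inner (axis 3 1) x = 0}"
    by (auto simp: S1_def S2_def cart_eq_inner_axis inner_commute)
  then show ?thesis using closed_Int[OF closed_sphere closed_hyperplane] by metis
qed

lemma sigma_lipschitz_on_subset: "sigma_lipschitz_on B P \<Longrightarrow> A \<subseteq> B \<Longrightarrow> sigma_lipschitz_on A P"
  by (auto simp: sigma_lipschitz_on_def)

text \<open>McShane's extension formula P y = Inf ((\<lambda>c. p c + sigma y (k c)) ` A).\<close>
lemma sigma_lipschitz_extension: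
  assumes "A \<noteq> {}" and k: "\<forall>c\<in>A. k c \<in> S2" and "\<forall>c\<in>A. 0 \<le> p c"
    and p: "\<forall>c\<in>A. \<forall>d\<in>A. \<bar>p c - p d\<bar> \<le> sigma (k c) (k d)"
  obtains P where "sigma_lipschitz_on S2 P" "\<forall>c\<in>A. P (k c) = p c"
proof -
  define P where "P y = Inf ((\<lambda>c. p c + sigma y (k c)) ` A)" for y
  have "0 \<le> p c + sigma y (k c)" if "y \<in> S2" "c \<in> A" for y c
    using assms that by (simp add: S2_def add_nonneg_nonneg sigma_nonneg)
  then have bdd: "bdd_below ((\<lambda>c. p c + sigma y (k c)) ` A)" if "y \<in> S2" for y
    using that by (intro bdd_belowI[of _ 0]) auto
  have P_le: "P y \<le> p c + sigma y (k c)" if "y \<in> S2" "c \<in> A" for y c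
    unfolding P_def using bdd[OF that(1)] that by (intro cInf_lower) auto
  have one_sided: "P x - sigma x y \<le> P y" if "x \<in> S2" "y \<in> S2" for x y
  proof -
    have "P x - sigma x y \<le> p c + sigma y (k c)" if "c \<in> A" for c
      using P_le[OF \<open>x \<in> S2\<close> that] sigma_triangle[of x y "k c"] \<open>x \<in> S2\<close> \<open>y \<in> S2\<close> k that
      by (simp add: S2_def)
    then show ?thesis unfolding P_def using \<open>A \<noteq> {}\<close> by (intro cInf_greatest) auto
  qed
  have "sigma_lipschitz_on S2 P"
    unfolding sigma_lipschitz_on_def
    using one_sided sigma_commute by (force simp: abs_le_iff)
  moreover have "\<forall>c\<in>A. P (k c) = p c"
  proof
    fix c assume c: "c \<in> A"
    have "P (k c) \<le> p c" using P_le[of "k c" c] k c sigma_self by (simp add: S2_def)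
    moreover have "p c \<le> P (k c)"
      unfolding P_def
    proof (rule cInf_greatest)
      fix z assume "z \<in> (\<lambda>d. p d + sigma (k c) (k d)) ` A"
      then obtain d where "d \<in> A" "z = p d + sigma (k c) (k d)" by auto
      then show "p c \<le> z" using p c by (force simp: abs_le_iff)
    qed (use \<open>A \<noteq> {}\<close> in auto)
    ultimately show "P (k c) = p c" by simp
  qed
  ultimately show thesis by (rule that)
qed

section \<open>Fibres over the equator\<close>

locale lifted_gluing = equator_gluing g + circle_lift F
  for g :: "real^3 \<Rightarrow> real^3" and F :: "real \<Rightarrow> real" +
  assumes g_eqpt: "\<And>t. g (eqpt t) = eqpt (F t)"
begin

lemma iota1_S1_in_Z: "c \<in> S1 \<Longrightarrow> iota g 1 c \<in> Z g"
  using iota_in_Z[of 1 c] S1_subset_Zc by auto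

lemma chain_cost_eqpt_le:
  "sorted ts \<Longrightarrow> chain_cost g (map (\<lambda>t. iota g 1 (eqpt t)) ts) \<le> ereal (partition_cost F ts)"
proof (induction ts rule: induct_list012)
  case (3 a b r)
  define m where "m = min (b - a) (F b - F a)"
  have "a \<le> b" "F a \<le> F b" using 3(3) mono_F by (auto simp: mono_def)
  then have "sigma (eqpt a) (eqpt b) \<le> b - a" "sigma (g (eqpt a)) (g (eqpt b)) \<le> F b - F a"
    using arccos_cos_le_abs[of "a - b"] arccos_cos_le_abs[of "F a - F b"] by (simp_all add: sigma_eqpt g_eqpt)
  then have "D g (iota g 1 (eqpt a)) (iota g 1 (eqpt b)) \<le> ereal m"
    unfolding m_def by (simp add: D_iota1_S1 eqpt_in_S1 min.coboundedI1 min.coboundedI2)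
  moreover have "chain_cost g (map (\<lambda>t. iota g 1 (eqpt t)) (b # r)) \<le> ereal (partition_cost F (b # r))"
    using 3 by simp
  ultimately have "D g (iota g 1 (eqpt a)) (iota g 1 (eqpt b)) + chain_cost g (map (\<lambda>t. iota g 1 (eqpt t)) (b # r))
      \<le> ereal m + ereal (partition_cost F (b # r))"
    by (rule add_mono)
  then show ?case by (simp add: m_def[symmetric])
qed (simp_all add: chain_cost_def)

lemma dZ_eqpt_le_arc_cost:
  assumes "s \<le> t"
  shows "dZ g (iota g 1 (eqpt s)) (iota g 1 (eqpt t)) \<le> ereal (arc_cost F s t)"
proof -
  define d where "d = dZ g (iota g 1 (eqpt s)) (iota g 1 (eqpt t))"
  have d_le: "d \<le> ereal (partition_cost F ts)" if "ts \<in> partitions s t" for ts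
  proof -
    have ts: "ts \<noteq> []" "sorted ts" "hd ts = s" "last ts = t" using that by (auto simp: partitions_def)
    moreover have "set (map (\<lambda>t. iota g 1 (eqpt t)) ts) \<subseteq> Z g"
      using iota1_S1_in_Z eqpt_in_S1 by auto
    ultimately have "d \<le> chain_cost g (map (\<lambda>t. iota g 1 (eqpt t)) ts)"
      unfolding d_def using dZ_le_chain_cost[of "map (\<lambda>t. iota g 1 (eqpt t)) ts" g]
      by (simp add: hd_map last_map)
    also have "\<dots> \<le> ereal (partition_cost F ts)" using chain_cost_eqpt_le ts by simp
    finally show ?thesis .
  qed
  have "0 \<le> d" unfolding d_def by (rule dZ_nonneg)
  moreover have "d \<le> ereal (partition_cost F [s, t])" by (rule d_le[OF two_point_partition[OF assms]])
  ultimately obtain r where r: "d = ereal r" by (cases d) auto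
  have "r \<le> arc_cost F s t" using assms d_le r by (intro le_arc_costI) auto
  then show ?thesis using r d_def by simp
qed

definition tent_potential :: "real \<Rightarrow> real^3 \<Rightarrow> real" where
  "tent_potential u c = tent u (equator_angle u c)"

lemma tent_potential_nonneg: "c \<in> S1 \<Longrightarrow> 0 \<le> tent_potential u c"
  unfolding tent_potential_def using equator_angle[of c u] by (intro tent_nonneg) auto

lemma tent_potential_lipschitz:
  assumes "c \<in> S1" "d \<in> S1"
  shows "\<bar>tent_potential u c - tent_potential u d\<bar> \<le> sigma c d"
    and "\<bar>tent_potential u c - tent_potential u d\<bar> \<le> sigma (g c) (g d)"
proof -
  have ordered: "\<bar>tent_potential u c - tent_potential u d\<bar> \<le> sigma c d \<and>
      \<bar>tent_potential u c - tent_potential u d\<bar> \<le> sigma (g c) (g d)"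
    if "c \<in> S1" "d \<in> S1" "equator_angle u c \<le> equator_angle u d" for c d
  proof -
    let ?s = "equator_angle u c" and ?t = "equator_angle u d"
    have "u \<le> ?s" "?t < u + 2*pi" "eqpt ?s = c" "eqpt ?t = d" using equator_angle that by auto
    then have "sigma c d = arccos (cos (?s - ?t))" "sigma (g c) (g d) = arccos (cos (F ?s - F ?t))"
      by (metis sigma_eqpt g_eqpt)+
    then show ?thesis
      using tent_diff_le_arccos_cos[of u ?s ?t] \<open>u \<le> ?s\<close> \<open>?t < u + 2*pi\<close> that(3)
      unfolding tent_potential_def by simp
  qed
  have "\<bar>tent_potential u c - tent_potential u d\<bar> \<le> sigma c d \<and>
      \<bar>tent_potential u c - tent_potential u d\<bar> \<le> sigma (g c) (g d)"
    using ordered[OF assms] ordered[OF assms(2,1)] sigma_commute[of c d] sigma_commute[of "g c" "g d"]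
    by (cases "equator_angle u c \<le> equator_angle u d") (auto simp: abs_minus_commute)
  then show "\<bar>tent_potential u c - tent_potential u d\<bar> \<le> sigma c d"
    and "\<bar>tent_potential u c - tent_potential u d\<bar> \<le> sigma (g c) (g d)" by auto
qed

lemma tent_potential_le_dZ:
  assumes "a \<in> S1" "b \<in> S1"
  shows "ereal \<bar>tent_potential u a - tent_potential u b\<bar> \<le> dZ g (iota g 1 a) (iota g 1 b)"
proof -
  have S1_ne: "S1 \<noteq> {}" using eqpt_in_S1 by blast
  have "S1 \<subseteq> S2" "g ` S1 \<subseteq> S2" using g_S1 by (auto simp: S1_def)
  obtain P1 where P1: "sigma_lipschitz_on S2 P1" "\<forall>c\<in>S1. P1 (id c) = tent_potential u c"
    using sigma_lipschitz_extension[OF S1_ne, of id "tent_potential u"] \<open>S1 \<subseteq> S2\<close>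
      tent_potential_nonneg tent_potential_lipschitz(1) by auto
  obtain P2 where P2: "sigma_lipschitz_on S2 P2" "\<forall>c\<in>S1. P2 (g c) = tent_potential u c"
    using sigma_lipschitz_extension[OF S1_ne, of g "tent_potential u"] \<open>g ` S1 \<subseteq> S2\<close>
      tent_potential_nonneg tent_potential_lipschitz(2) by auto
  have "Zc i \<subseteq> S2" for i by (auto simp: Zc_def)
  then have "ereal \<bar>glued P1 P2 (iota g 1 a) - glued P1 P2 (iota g 1 b)\<bar> \<le> dZ g (iota g 1 a) (iota g 1 b)"
    using P1 P2 by (intro glued_dZ_lipschitz) (auto intro: sigma_lipschitz_on_subset)
  moreover have "a \<in> Zc 1" "b \<in> Zc 1" using assms S1_subset_Zc by auto
  ultimately show ?thesis using assms P1(2) by (simp add: glued_iota1)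
qed

text \<open>If two points of the equator are identified in the quotient, then so is one of the
  two arcs between them: otherwise each arc contains a point of positive distance, and the
  tent potential separates the endpoints.\<close>
lemma dZ_eq_0_arc:
  assumes uv: "u < v" "v < u + 2*pi" and zero: "dZ g (iota g 1 (eqpt u)) (iota g 1 (eqpt v)) = 0"
  shows "(\<forall>s\<in>{u..v}. dZ g (iota g 1 (eqpt s)) (iota g 1 (eqpt u)) = 0) \<or>
         (\<forall>s\<in>{v..u+2*pi}. dZ g (iota g 1 (eqpt s)) (iota g 1 (eqpt u)) = 0)"
proof (rule ccontr)
  assume "\<not> ?thesis"
  then obtain s1 s2 where s1: "s1 \<in> {u..v}" "dZ g (iota g 1 (eqpt s1)) (iota g 1 (eqpt u)) \<noteq> 0"
    and s2: "s2 \<in> {v..u+2*pi}" "dZ g (iota g 1 (eqpt s2)) (iota g 1 (eqpt u)) \<noteq> 0" by auto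
  have "0 < dZ g (iota g 1 (eqpt u)) (iota g 1 (eqpt s1))"
    using s1(2) dZ_nonneg dZ_commute by (metis order_le_less)
  then have "0 < arc_cost F u s1"
    using dZ_eqpt_le_arc_cost[of u s1] s1(1) by (metis atLeastAtMost_iff ereal_less(2) less_le_trans)
  moreover have "0 < dZ g (iota g 1 (eqpt s2)) (iota g 1 (eqpt (u + 2*pi)))"
    using s2(2) dZ_nonneg eqpt_add_2pi by (metis order_le_less)
  then have "0 < arc_cost F s2 (u + 2*pi)"
    using dZ_eqpt_le_arc_cost[of s2 "u + 2*pi"] s2(1) by (metis atLeastAtMost_iff ereal_less(2) less_le_trans)
  ultimately have "0 < tent u v" using tent_pos[of u s1 v s2] s1(1) s2(1) by auto
  moreover have "tent_potential u (eqpt u) = 0" "tent_potential u (eqpt v) = tent u v"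
    unfolding tent_potential_def using equator_angle_eqpt uv by (auto simp: tent_self)
  ultimately show False
    using tent_potential_le_dZ[OF eqpt_in_S1 eqpt_in_S1, of u u v] zero by simp
qed

end

context lifted_gluing
begin

definition equator_fiber :: "(nat \<times> (real^3)) set \<Rightarrow> (real^3) set" where
  "equator_fiber w = {c \<in> S1. dZ g (iota g 1 c) w = 0}"

lemma closed_equator_fiber:
  assumes w: "w \<in> Z g"
  shows "closed (equator_fiber w)"
  unfolding closed_sequential_limits equator_fiber_def
proof (intro allI impI, elim conjE)
  fix x l assume "\<forall>n. x n \<in> {c \<in> S1. dZ g (iota g 1 c) w = 0}" and lim: "x \<longlonglongrightarrow> l"
  then have xS: "x n \<in> S1" and xw: "dZ g (iota g 1 (x n)) w = 0" for n by auto
  have lS: "l \<in> S1" using closed_sequentially[OF closed_S1] xS lim by blast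
  have "dZ g (iota g 1 l) w \<le> 0 + ereal e" if "0 < e" for e
  proof -
    define e' where "e' = min e pi"
    have e': "0 < e'" "e' \<le> e" "e' \<le> pi" using that by (auto simp: e'_def)
    have "(\<lambda>n. inner l (x n)) \<longlonglongrightarrow> inner l l" using lim by (intro tendsto_intros)
    moreover have "cos e' < inner l l"
      using cos_monotone_0_pi[of 0 e'] e' norm_of_S1[OF lS] by (simp add: power2_norm_eq_inner[symmetric])
    ultimately obtain n where "cos e' < inner l (x n)"
      using order_tendstoD(1) eventually_sequentially by (metis order_refl)
    then have "sigma l (x n) < e'"
      using sigma_less_if_cos_less_inner norm_of_S1 lS xS e' by auto
    moreover have "dZ g (iota g 1 l) w \<le> dZ g (iota g 1 l) (iota g 1 (x n)) + dZ g (iota g 1 (x n)) w"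
      using dZ_triangle iota1_S1_in_Z lS xS w by blast
    moreover have "dZ g (iota g 1 l) (iota g 1 (x n)) \<le> ereal (sigma l (x n))"
      using dZ_iota_le_sigma[of 1 l "x n"] lS xS S1_subset_Zc by auto
    ultimately show ?thesis using xw e' by (simp add: order.trans)
  qed
  then have "dZ g (iota g 1 l) w \<le> 0" by (rule ereal_le_epsilon2)
  then show "l \<in> {c \<in> S1. dZ g (iota g 1 c) w = 0}" using lS dZ_nonneg antisym by blast
qed

lemma equator_fiber_arc:
  assumes "w \<in> Z g" "eqpt u \<in> equator_fiber w"
    and "\<forall>r\<in>{s..t}. dZ g (iota g 1 (eqpt r)) (iota g 1 (eqpt u)) = 0"
  shows "eqpt ` {s..t} \<subseteq> equator_fiber w"
  using assms dZ_eq_0_trans[of "iota g 1 (eqpt _)" "iota g 1 (eqpt u)" w] iota1_S1_in_Z eqpt_in_S1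
  by (fastforce simp: equator_fiber_def)

lemma equator_fiber_connected_component:
  assumes w: "w \<in> Z g" and a: "a \<in> equator_fiber w" and b: "b \<in> equator_fiber w" and "a \<noteq> b"
  shows "connected_component (equator_fiber w) a b"
proof -
  have arc_connected: "connected (eqpt ` {s..t})" for s t
    by (intro connected_continuous_image continuous_on_eqpt connected_Icc)
  obtain u where u: "eqpt u = a" using S1_eq_eqpt_image[of a 0] a by (auto simp: equator_fiber_def)
  define v where "v = equator_angle u b"
  have v: "u \<le> v" "v < u + 2*pi" "eqpt v = b"
    using equator_angle[of b u] b by (auto simp: v_def equator_fiber_def)
  then have "u < v" using u \<open>a \<noteq> b\<close> by (metis order_le_less)
  have "dZ g (iota g 1 a) (iota g 1 b) = 0"
    using dZ_eq_0_trans[of "iota g 1 a" w "iota g 1 b"] a b w iota1_S1_in_Z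
    by (simp add: dZ_commute equator_fiber_def)
  then consider "\<forall>r\<in>{u..v}. dZ g (iota g 1 (eqpt r)) (iota g 1 (eqpt u)) = 0"
    | "\<forall>r\<in>{v..u+2*pi}. dZ g (iota g 1 (eqpt r)) (iota g 1 (eqpt u)) = 0"
    using dZ_eq_0_arc[OF \<open>u < v\<close> v(2)] u v(3) by blast
  then show ?thesis
  proof cases
    case 1
    then have "eqpt ` {u..v} \<subseteq> equator_fiber w" using equator_fiber_arc w a u by blast
    moreover have "a \<in> eqpt ` {u..v}" "b \<in> eqpt ` {u..v}"
      using u v \<open>u < v\<close> by (auto intro: rev_image_eqI[of u] rev_image_eqI[of v])
    ultimately show ?thesis by (intro connected_componentI[OF arc_connected])
  next
    case 2
    then have "eqpt ` {v..u+2*pi} \<subseteq> equator_fiber w" using equator_fiber_arc w a u by blast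
    moreover have "a \<in> eqpt ` {v..u+2*pi}" "b \<in> eqpt ` {v..u+2*pi}"
      using u v eqpt_add_2pi[of u] by (auto intro: rev_image_eqI[of "u + 2*pi"] rev_image_eqI[of v])
    ultimately show ?thesis by (intro connected_componentI[OF arc_connected])
  qed
qed

lemma compact_equator_fiber: "w \<in> Z g \<Longrightarrow> compact (equator_fiber w)"
proof -
  have "equator_fiber w \<subseteq> sphere 0 1" by (auto simp: equator_fiber_def S1_def S2_def)
  then show "w \<in> Z g \<Longrightarrow> compact (equator_fiber w)"
    using closed_equator_fiber bounded_subset[OF bounded_sphere] by (simp add: compact_eq_bounded_closed)
qed

lemma connected_equator_fiber: "w \<in> Z g \<Longrightarrow> connected (equator_fiber w)"
  unfolding connected_iff_connected_component
  using equator_fiber_connected_component connected_component_refl by metis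

lemma iota_t_fiber_eq:
  assumes "i \<in> {1,2}" "w \<in> Z g"
  shows "{a \<in> Zc i. iota_t g i a = Q g w} = {a \<in> Zc i. dZ g (iota g i a) w = 0}"
  using assms Q_eq_iff iota_in_Z unfolding iota_t_def by auto

lemma iota2_equator_fiber:
  "{b \<in> S1. dZ g (iota g 2 b) w = 0} = g ` equator_fiber w"
proof -
  have "{b \<in> S1. dZ g (iota g 2 b) w = 0} = {b \<in> g ` S1. dZ g (iota g 2 b) w = 0}"
    using g_S1 by simp
  also have "\<dots> = g ` {c \<in> S1. dZ g (iota g 2 (g c)) w = 0}" by auto
  also have "\<dots> = g ` equator_fiber w"
    unfolding equator_fiber_def using iota2_g by (intro arg_cong[where f = "image g"]) auto
  finally show ?thesis .
qed

theorem iota_t_fibers: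
  assumes g_cont: "continuous_on S1 g" and i: "i \<in> {1,2}" and z: "z \<in> Zt g"
  defines "P \<equiv> {a \<in> Zc i. iota_t g i a = z}"
  shows "compact P" and "connected P" and "(\<exists>a b. a \<noteq> b \<and> a \<in> P \<and> b \<in> P) \<longrightarrow> P \<subseteq> S1"
proof -
  obtain w where w: "w \<in> Z g" "z = Q g w"
    using z unfolding Zt_def Q_def by (auto elim: quotientE)
  have P: "P = {a \<in> Zc i. dZ g (iota g i a) w = 0}"
    unfolding P_def w(2) using iota_t_fiber_eq[OF i w(1)] .
  have "compact P \<and> connected P \<and> ((\<exists>a b. a \<noteq> b \<and> a \<in> P \<and> b \<in> P) \<longrightarrow> P \<subseteq> S1)"
  proof (cases "P \<inter> Zo i = {}")
    case False
    then obtain a where "a \<in> Zo i" "a \<in> P" by auto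
    then have "P = {a}" using iota_t_fiber_Zo[OF i] by (auto simp: P_def)
    then show ?thesis by auto
  next
    case True
    define C where "C = equator_fiber w"
    have C: "compact C" "connected C"
      using compact_equator_fiber connected_equator_fiber w(1) by (auto simp: C_def)
    have "P \<subseteq> S1" using True Zc_eq_Zo_Un_S1[OF i] P_def by auto
    then have "P = {a \<in> S1. dZ g (iota g i a) w = 0}" using S1_subset_Zc P by auto
    then have "P = C \<or> P = g ` C" using i iota2_equator_fiber unfolding C_def equator_fiber_def by auto
    moreover have "continuous_on C g"
      using g_cont by (rule continuous_on_subset) (auto simp: C_def equator_fiber_def)
    ultimately show ?thesis
      using C \<open>P \<subseteq> S1\<close> compact_continuous_image connected_continuous_image by metis
  qed
  then show "compact P" and "connected P" and "(\<exists>a b. a \<noteq> b \<and> a \<in> P \<and> b \<in> P) \<longrightarrow> P \<subseteq> S1"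
    by blast+
qed

end

theorem lemma3p3:
  fixes g :: "real^3 \<Rightarrow> real^3" and i :: nat
  assumes "orient_pres_homeo g"
    and "i \<in> {1, 2}"
  shows "(\<forall>a \<in> Zc i. \<forall>b \<in> Zc i. dZt g (iota_t g i a) (iota_t g i b) \<le> ereal (sigma a b))
       \<and> (\<forall>x \<in> Zo i. \<exists>U. open U \<and> x \<in> U \<and>
            (\<forall>a \<in> U \<inter> Zo i. \<forall>b \<in> U \<inter> Zo i.
               dZt g (iota_t g i a) (iota_t g i b) = ereal (sigma a b)))
       \<and> (\<forall>z \<in> Zt g.
            compact {a \<in> Zc i. iota_t g i a = z}
          \<and> connected {a \<in> Zc i. iota_t g i a = z}
          \<and> ((\<exists>a b. a \<noteq> b \<and> a \<in> {a \<in> Zc i. iota_t g i a = z} \<and> b \<in> {a \<in> Zc i. iota_t g i a = z})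
               \<longrightarrow> {a \<in> Zc i. iota_t g i a = z} \<subseteq> S1))"
proof -
  obtain h F where hom: "homeomorphism S1 S1 g h" and "strict_mono F"
    and F_periodic: "\<And>t. F (t + 2*pi) = F t + 2*pi" and g_eqpt: "\<And>t. g (eqpt t) = eqpt (F t)"
    using assms(1) unfolding orient_pres_homeo_def by blast
  have "mono F" using \<open>strict_mono F\<close> by (rule strict_mono_mono)
  have "g ` S1 = S1" "continuous_on S1 g" "inj_on g S1"
    using hom unfolding homeomorphism_def by (auto intro: inj_on_inverseI)
  then interpret lifted_gluing g F
    using \<open>mono F\<close> F_periodic g_eqpt by unfold_locales auto
  show ?thesis
  proof (intro conjI ballI)
    fix a b assume "a \<in> Zc i" "b \<in> Zc i"
    then show "dZt g (iota_t g i a) (iota_t g i b) \<le> ereal (sigma a b)"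
      by (rule dZt_iota_t_le_sigma[OF assms(2)])
  next
    fix x assume "x \<in> Zo i"
    then show "\<exists>U. open U \<and> x \<in> U \<and>
        (\<forall>a \<in> U \<inter> Zo i. \<forall>b \<in> U \<inter> Zo i. dZt g (iota_t g i a) (iota_t g i b) = ereal (sigma a b))"
      by (rule iota_t_local_isometry[OF assms(2)])
  qed (erule iota_t_fibers[OF \<open>continuous_on S1 g\<close> assms(2)])+
qed

end
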